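(* Let $p$ be an odd prime and $r$ an integer with $p \nmid r$. Let $$f_{r,p}(x) = \frac{1}{2\sqrt{2}}\left((1+\sqrt{2})^r (x+\sqrt{2})^p - (1-\sqrt{2})^r (x - \sqrt{2})^p\right) \in \mathbb{Z}[x].$$ Then the discriminant of $f_{r,p}$ is $(-1)^{\frac{p(p-1)}{2}} 2^{\frac{3}{2}(p-1)(p-2)} p^p$. *)

theory Defs
  imports "HOL-Computational_Algebra.Polynomial" "HOL-Computational_Algebra.Primes"
          "Subresultants.Resultant_Prelim"
begin

definition discriminant :: "'a :: field poly \<Rightarrow> 'a" where
  "discriminant f = (-1) ^ (degree f * (degree f - 1) div 2)
      * resultant f (pderiv f) / lead_coeff f"

text \<open>f_{r,p}(x) = ((1+sqrt 2)^r (x+sqrt 2)^p - (1-sqrt 2)^r (x-sqrt 2)^p) / (2 sqrt 2),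
  as a real polynomial (its coefficients are integers); r is an arbitrary integer.\<close>
definition f_rp :: "int \<Rightarrow> nat \<Rightarrow> real poly" where
  "f_rp r p = smult ((1 + sqrt 2) powi r / (2 * sqrt 2)) ([:sqrt 2, 1:] ^ p)
            - smult ((1 - sqrt 2) powi r / (2 * sqrt 2)) ([:- sqrt 2, 1:] ^ p)"

end

theory Submission
  imports
    Defs
    "Subresultants.Subresultant"
    "HOL-Computational_Algebra.Fundamental_Theorem_Algebra"
begin

text \<open>
  Over an algebraically closed field, Res(F, G) = lc(F)^(deg G) \<Prod> G(z), the product running over
  the roots z of F with multiplicity; this follows by induction along the Euclidean algorithm.
  For F = \<alpha>(x + s)^n - \<beta>(x - s)^n every root z satisfies \<alpha>(z + s)^n = \<beta>(z - s)^n, which turns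
  F'(z)(z + s)(z - s) into -2sn\<alpha>(z + s)^n, while the products of z + s and z - s over the roots
  are read off from F(-s) and F(s). This gives
  Res(F, F') = (-1)^(n+1) (\<alpha> - \<beta>) n^n (\<alpha>\<beta>)^(n-1) (2s)^(n(n-1)) over \<complex>, hence over \<real>.
  For f_{r,p} we have \<alpha>, \<beta> = (1 \<plusminus> \<surd>2)^r / (2\<surd>2) and s = \<surd>2, so \<alpha>\<beta> = \<plusminus>1/8 and (2s)^2 = 8.
\<close>

lemma prod_mset_diff_swap:
  fixes A B :: "'a::comm_ring_1 multiset"
  shows "(\<Prod>a\<in>#A. \<Prod>b\<in>#B. a - b) = (-1) ^ (size A * size B) * (\<Prod>b\<in>#B. \<Prod>a\<in>#A. b - a)"
proof -
  have "(\<Prod>b\<in>#B. a - b) = (-1) ^ size B * (\<Prod>b\<in>#B. b - a)" for a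
    by (induction B) (simp_all add: algebra_simps)
  then have "(\<Prod>a\<in>#A. \<Prod>b\<in>#B. a - b) = ((-1) ^ size B) ^ size A * (\<Prod>a\<in>#A. \<Prod>b\<in>#B. b - a)"
    by (simp only: prod_mset.distrib prod_mset_constant)
  also have "((-1) ^ size B) ^ size A = ((-1) ^ (size A * size B) :: 'a)"
    by (metis power_mult mult.commute)
  also have "(\<Prod>a\<in>#A. \<Prod>b\<in>#B. b - a) = (\<Prod>b\<in>#B. \<Prod>a\<in>#A. b - a)"
    by (rule prod_mset.swap)
  finally show ?thesis .
qed

lemma prod_mset_power_distrib:
  "(\<Prod>x\<in>#A. f x ^ n) = (\<Prod>x\<in>#A. f x) ^ (n :: nat)"
  by (induction A) (simp_all add: power_mult_distrib)

lemma proots_prod_linear_factors: "proots (\<Prod>a\<in>#A. [:- a, 1:]) = (A :: 'a::idom multiset)"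
proof (induction A)
  case (add a A)
  have "proots [:- a, 1:] = {#a#}"
    using proots_linear_factor[of "- a"] by simp
  moreover have "(\<Prod>x\<in>#A. [:- x, 1:]) \<noteq> 0"
    by (auto simp: prod_mset_zero_iff)
  ultimately show ?case
    using add by (simp del: mult_pCons_left add: proots_mult)
qed simp

lemma alg_closed_poly_decompose_multiset:
  fixes p :: "'a::alg_closed_field poly"
  shows "p = smult (lead_coeff p) (\<Prod>a\<in>#proots p. [:- a, 1:])"
proof (cases "p = 0")
  case False
  then obtain A where "p = smult (lead_coeff p) (\<Prod>a\<in>#A. [:- a, 1:])"
    using alg_closed_imp_factorization by blast
  moreover from this have "proots p = A"
    using False by (metis leading_coeff_0_iff proots_prod_linear_factors proots_smult)
  ultimately show ?thesis by simp
qed simp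

lemma size_proots_alg_closed: "size (proots p) = degree (p :: 'a::alg_closed_field poly)"
proof (cases "p = 0")
  case False
  then show ?thesis
    using alg_closed_imp_factorization[OF False] proots_prod_linear_factors
    by (metis leading_coeff_0_iff proots_smult)
qed simp

lemma poly_eq_prod_proots_alg_closed:
  fixes p :: "'a::alg_closed_field poly"
  shows "poly p x = lead_coeff p * (\<Prod>a\<in>#proots p. x - a)"
proof -
  have "poly p x = poly (smult (lead_coeff p) (\<Prod>a\<in>#proots p. [:- a, 1:])) x"
    by (subst alg_closed_poly_decompose_multiset [of p]) (rule refl)
  then show ?thesis
    by (simp add: poly_prod_mset)
qed

lemma prod_proots_poly_swap:
  fixes F G :: "'a::alg_closed_field poly"
  shows "lead_coeff F ^ degree G * (\<Prod>a\<in>#proots F. poly G a)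
       = (-1) ^ (degree F * degree G) * lead_coeff G ^ degree F * (\<Prod>b\<in>#proots G. poly F b)"
proof -
  have "(\<Prod>a\<in>#proots F. poly G a) = lead_coeff G ^ degree F * (\<Prod>a\<in>#proots F. \<Prod>b\<in>#proots G. a - b)"
    by (simp only: poly_eq_prod_proots_alg_closed prod_mset.distrib prod_mset_constant size_proots_alg_closed)
  moreover have "(\<Prod>b\<in>#proots G. poly F b) = lead_coeff F ^ degree G * (\<Prod>b\<in>#proots G. \<Prod>a\<in>#proots F. b - a)"
    by (simp only: poly_eq_prod_proots_alg_closed prod_mset.distrib prod_mset_constant size_proots_alg_closed)
  ultimately show ?thesis
    using prod_mset_diff_swap[of "proots F" "proots G"]
    by (simp add: size_proots_alg_closed algebra_simps)
qed

lemma resultant_mod: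
  fixes F G :: "'a::field poly"
  assumes "degree G \<le> degree F" and "0 < degree G"
  shows "resultant F G = (-1) ^ (degree F * degree G) * lead_coeff G ^ (degree F - degree (F mod G))
           * resultant G (F mod G)"
proof -
  define H where "H = F mod G"
  have FGH: "F + (- (F div G)) * G = H"
    unfolding H_def by (metis add_diff_cancel_left' diff_conv_add_uminus div_mult_mod_eq
        minus_mult_left mult.commute)
  have "degree H < degree G"
    using assms(2) degree_mod_less'[of G F] unfolding H_def by fastforce
  then have choice: "degree H < degree G \<or> H = 0 \<and> F \<noteq> 0 \<and> G \<noteq> 0"
    by simp
  show ?thesis
  proof (cases "0 < degree H")
    case True
    from BT_lemma_1_12[OF FGH assms(1) choice True]
    have "subresultant 0 F G = smult ((-1) ^ (degree F * degree G) * lead_coeff G ^ (degree F - degree H))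
        (subresultant 0 G H)"
      by simp
    then show ?thesis
      unfolding subresultant_resultant H_def by simp
  next
    case False
    then obtain h where H: "H = [:h:]"
      by (metis degree_0_id neq0_conv)
    from BT_lemma_1_13[OF FGH assms(1) choice] \<open>degree H < degree G\<close>
    have "subresultant 0 F G = smult ((-1) ^ (degree F * degree G) * lead_coeff G ^ degree F
        * h ^ (degree G - 1)) H"
      using H by simp
    then have "resultant F G = (-1) ^ (degree F * degree G) * lead_coeff G ^ degree F * h ^ degree G"
      unfolding subresultant_resultant H using assms(2)
      by (simp add: power_eq_if[of h "degree G"])
    then show ?thesis
      using H unfolding H_def by simp
  qed
qed

lemma poly_mod_eq_at_proots:
  assumes "x \<in># proots G"
  shows "poly (F mod G) x = poly F x"
proof -
  have "poly G x = 0"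
    using assms by (cases "G = 0") auto
  then show ?thesis
    by (metis add_0 div_mult_mod_eq mult_zero_right poly_add poly_mult)
qed

lemma resultant_eq_prod_proots:
  fixes F G :: "'a::alg_closed_field poly"
  assumes "F \<noteq> 0"
  shows "resultant F G = lead_coeff F ^ degree G * (\<Prod>a\<in>#proots F. poly G a)"
  using assms
proof (induction "degree F + degree G" arbitrary: F G rule: less_induct)
  case less
  consider "degree G = 0" | "degree F = 0" | "0 < degree G" "degree G \<le> degree F"
    | "0 < degree F" "degree F < degree G"
    by linarith
  then show ?case
  proof cases
    case 1
    then obtain g where "G = [:g:]"
      by (metis degree_0_id)
    moreover have "poly [:g:] = (\<lambda>_. g)"
      by auto
    ultimately show ?thesis
      by (simp add: size_proots_alg_closed)
  next
    case 2
    then obtain c where "F = [:c:]"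
      by (metis degree_0_id)
    then show ?thesis
      by simp
  next
    case 3
    have "degree (F mod G) < degree G"
      using 3 degree_mod_less'[of G F] by fastforce
    with 3 have "resultant G (F mod G)
        = lead_coeff G ^ degree (F mod G) * (\<Prod>b\<in>#proots G. poly (F mod G) b)"
      by (intro less.hyps) auto
    also have "(\<Prod>b\<in>#proots G. poly (F mod G) b) = (\<Prod>b\<in>#proots G. poly F b)"
      by (intro arg_cong[where f = prod_mset] image_mset_cong poly_mod_eq_at_proots)
    finally have "resultant F G
        = (-1) ^ (degree F * degree G) * lead_coeff G ^ degree F * (\<Prod>b\<in>#proots G. poly F b)"
      using resultant_mod[OF 3(2,1)] \<open>degree (F mod G) < degree G\<close> 3
      by (simp add: power_add[symmetric])
    then show ?thesis
      by (simp add: prod_proots_poly_swap)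
  next
    case 4
    have "degree (G mod F) < degree F"
      using 4 degree_mod_less'[of F G] by fastforce
    with 4 less.prems have "resultant F (G mod F)
        = lead_coeff F ^ degree (G mod F) * (\<Prod>a\<in>#proots F. poly (G mod F) a)"
      by (intro less.hyps) auto
    also have "(\<Prod>a\<in>#proots F. poly (G mod F) a) = (\<Prod>a\<in>#proots F. poly G a)"
      by (intro arg_cong[where f = prod_mset] image_mset_cong poly_mod_eq_at_proots)
    finally have "resultant G F = (-1) ^ (degree F * degree G) * (lead_coeff F ^ degree G
        * (\<Prod>a\<in>#proots F. poly G a))"
      using resultant_mod[of F G] \<open>degree (G mod F) < degree F\<close> 4
      by (simp add: mult.commute[of "degree G"] power_add[symmetric])
    then show ?thesis
      using resultant_swap[of F G] by (simp add: minus_one_mult_self)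
  qed
qed

definition power_diff_poly :: "'a::comm_ring_1 \<Rightarrow> 'a \<Rightarrow> 'a \<Rightarrow> nat \<Rightarrow> 'a poly" where
  "power_diff_poly \<alpha> \<beta> s n = smult \<alpha> ([:s, 1:] ^ n) - smult \<beta> ([:- s, 1:] ^ n)"

lemma poly_power_diff_poly [simp]:
  "poly (power_diff_poly \<alpha> \<beta> s n) x = \<alpha> * (x + s) ^ n - \<beta> * (x - s) ^ n"
  by (simp add: power_diff_poly_def poly_power algebra_simps)

lemma pderiv_power_diff_poly:
  fixes \<alpha> \<beta> s :: "'a::idom"
  shows "pderiv (power_diff_poly \<alpha> \<beta> s n) = smult (of_nat n) (power_diff_poly \<alpha> \<beta> s (n - 1))"
  by (simp add: power_diff_poly_def pderiv_diff pderiv_smult pderiv_power pderiv_pCons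
      smult_diff_right mult.commute)

lemma
  fixes \<alpha> \<beta> s :: "'a::idom"
  assumes "\<alpha> \<noteq> \<beta>"
  shows degree_power_diff_poly: "degree (power_diff_poly \<alpha> \<beta> s n) = n"
    and lead_coeff_power_diff_poly: "lead_coeff (power_diff_poly \<alpha> \<beta> s n) = \<alpha> - \<beta>"
proof -
  have "coeff ([:c, 1:] ^ n) n = 1" for c :: 'a
    using lead_coeff_power[of "[:c, 1:]" n] degree_linear_power[of c n] by simp
  then have coeff_n: "coeff (power_diff_poly \<alpha> \<beta> s n) n = \<alpha> - \<beta>"
    by (simp add: power_diff_poly_def)
  have "degree (power_diff_poly \<alpha> \<beta> s n) \<le> n"
    unfolding power_diff_poly_def
    by (intro degree_diff_le order.trans[OF degree_smult_le] eq_imp_le degree_linear_power)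
  moreover have "n \<le> degree (power_diff_poly \<alpha> \<beta> s n)"
    using coeff_n assms by (intro le_degree) simp
  ultimately show "degree (power_diff_poly \<alpha> \<beta> s n) = n"
    by simp
  with coeff_n show "lead_coeff (power_diff_poly \<alpha> \<beta> s n) = \<alpha> - \<beta>"
    by simp
qed

lemma (in map_poly_comm_ring_hom) map_poly_power_diff_poly:
  "map_poly hom (power_diff_poly \<alpha> \<beta> s n) = power_diff_poly (hom \<alpha>) (hom \<beta>) (hom s) n"
  by (simp add: power_diff_poly_def hom_distribs)

lemma poly_pderiv_power_diff_poly_at_root:
  fixes \<alpha> \<beta> s z :: "'a::idom"
  assumes "0 < n" and "poly (power_diff_poly \<alpha> \<beta> s n) z = 0"
  shows "poly (pderiv (power_diff_poly \<alpha> \<beta> s n)) z * ((z + s) * (z - s))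
       = - (2 * s * of_nat n * \<alpha>) * (z + s) ^ n"
proof -
  obtain m where n: "n = Suc m"
    using assms(1) gr0_implies_Suc by blast
  have root: "\<beta> * (z - s) ^ n = \<alpha> * (z + s) ^ n"
    using assms(2) by simp
  have "poly (pderiv (power_diff_poly \<alpha> \<beta> s n)) z * ((z + s) * (z - s))
      = of_nat n * (\<alpha> * (z + s) ^ n * (z - s) - \<beta> * (z - s) ^ n * (z + s))"
    by (simp add: pderiv_power_diff_poly n algebra_simps)
  also have "\<dots> = - (2 * s * of_nat n * \<alpha>) * (z + s) ^ n"
    unfolding root by (simp add: algebra_simps)
  finally show ?thesis .
qed

lemma
  fixes \<alpha> \<beta> s :: "'a::alg_closed_field"
  assumes "0 < n" and "\<alpha> \<noteq> \<beta>"
  shows prod_proots_power_diff_poly_plus: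
      "(\<alpha> - \<beta>) * (\<Prod>z\<in>#proots (power_diff_poly \<alpha> \<beta> s n). z + s) = - \<beta> * (2 * s) ^ n"
    and prod_proots_power_diff_poly_minus:
      "(\<alpha> - \<beta>) * (\<Prod>z\<in>#proots (power_diff_poly \<alpha> \<beta> s n). z - s) = (-1) ^ n * \<alpha> * (2 * s) ^ n"
proof -
  let ?F = "power_diff_poly \<alpha> \<beta> s n"
  have size: "size (proots ?F) = n"
    using assms(2) by (simp add: size_proots_alg_closed degree_power_diff_poly)
  have poly_F: "poly ?F x = (\<alpha> - \<beta>) * (\<Prod>z\<in>#proots ?F. x - z)" for x
    using poly_eq_prod_proots_alg_closed[of ?F x] lead_coeff_power_diff_poly[OF assms(2)] by simp
  have "(\<Prod>z\<in>#A. - s - z) = (-1) ^ size A * (\<Prod>z\<in>#A. z + s)" for A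
    by (induction A) (simp_all add: algebra_simps)
  then have "(-1) ^ n * ((\<alpha> - \<beta>) * (\<Prod>z\<in>#proots ?F. z + s)) = poly ?F (- s)"
    by (simp add: poly_F size del: poly_power_diff_poly)
  also have "\<dots> = (-1) ^ n * (- \<beta> * (2 * s) ^ n)"
    using assms(1) by (simp add: power_minus[of "2 * s"])
  finally show "(\<alpha> - \<beta>) * (\<Prod>z\<in>#proots ?F. z + s) = - \<beta> * (2 * s) ^ n"
    by (rule mult_left_cancel[THEN iffD1, rotated]) simp
  have "(\<Prod>z\<in>#A. s - z) = (-1) ^ size A * (\<Prod>z\<in>#A. z - s)" for A
    by (induction A) (simp_all add: algebra_simps)
  then have "(-1) ^ n * ((\<alpha> - \<beta>) * (\<Prod>z\<in>#proots ?F. z - s)) = poly ?F s"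
    by (simp add: poly_F size del: poly_power_diff_poly)
  also have "\<dots> = (-1) ^ n * ((-1) ^ n * \<alpha> * (2 * s) ^ n)"
    using assms(1) by (simp add: mult.assoc[symmetric] minus_one_mult_self)
  finally show "(\<alpha> - \<beta>) * (\<Prod>z\<in>#proots ?F. z - s) = (-1) ^ n * \<alpha> * (2 * s) ^ n"
    by (rule mult_left_cancel[THEN iffD1, rotated]) simp
qed

lemma prod_proots_pderiv_power_diff_poly:
  fixes \<alpha> \<beta> s :: "'a::alg_closed_field"
  assumes "0 < n" and "\<alpha> \<noteq> \<beta>"
  defines "R \<equiv> proots (power_diff_poly \<alpha> \<beta> s n)"
  shows "(\<Prod>z\<in>#R. poly (pderiv (power_diff_poly \<alpha> \<beta> s n)) z) * ((\<Prod>z\<in>#R. z + s) * (\<Prod>z\<in>#R. z - s))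
       = (- (2 * s * of_nat n * \<alpha>)) ^ n * (\<Prod>z\<in>#R. z + s) ^ n"
proof -
  let ?F = "power_diff_poly \<alpha> \<beta> s n"
  have "degree ?F = n"
    using assms(2) by (rule degree_power_diff_poly)
  then have "?F \<noteq> 0" and "size R = n"
    using assms(1) by (auto simp: R_def size_proots_alg_closed)
  have "(\<Prod>z\<in>#R. poly (pderiv ?F) z) * ((\<Prod>z\<in>#R. z + s) * (\<Prod>z\<in>#R. z - s))
      = (\<Prod>z\<in>#R. poly (pderiv ?F) z * ((z + s) * (z - s)))"
    by (simp add: prod_mset.distrib)
  also have "\<dots> = (\<Prod>z\<in>#R. - (2 * s * of_nat n * \<alpha>) * (z + s) ^ n)"
    unfolding R_def using \<open>?F \<noteq> 0\<close> assms(1)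
    by (intro arg_cong[where f = prod_mset] image_mset_cong poly_pderiv_power_diff_poly_at_root) auto
  finally show ?thesis
    by (simp only: prod_mset.distrib prod_mset_constant \<open>size R = n\<close> prod_mset_power_distrib)
qed

text \<open>
  The three hypotheses are the identities above for c = \<alpha> - \<beta>, P = \<Prod> F'(z), Y = \<Prod> (z + s)
  and Z = \<Prod> (z - s), with q = 2s and N = n.
\<close>

lemma shift_products_elim:
  fixes c P Y Z N \<alpha> \<beta> q :: "'a::field"
  assumes "0 < n" and "\<alpha> \<noteq> 0" and "\<beta> \<noteq> 0" and "q \<noteq> 0"
    and PYZ: "P * (Y * Z) = (- (q * N * \<alpha>)) ^ n * Y ^ n"
    and cY: "c * Y = - \<beta> * q ^ n" and cZ: "c * Z = (-1) ^ n * \<alpha> * q ^ n"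
  shows "c ^ (n - 1) * P = (-1) ^ (n + 1) * c * N ^ n * (\<alpha> * \<beta>) ^ (n - 1) * q ^ (n * (n - 1))"
    (is "_ = ?X")
proof -
  obtain m where n: "n = Suc m"
    using assms(1) gr0_implies_Suc by blast
  have W: "c * Y * (c * Z) = (-1) ^ (n + 1) * (\<alpha> * \<beta>) * q ^ (n + n)"
    unfolding cY cZ by (simp add: power_add algebra_simps)
  have q_pow: "q ^ (n * (n - 1)) * q ^ (n + n) = (q ^ Suc n) ^ n"
  proof -
    have "q ^ (n * (n - 1)) * q ^ (n + n) = q ^ (n * (n - 1) + (n + n))"
      by (rule power_add [symmetric])
    also have "n * (n - 1) + (n + n) = Suc n * n"
      by (simp add: n)
    finally show ?thesis
      by (simp only: power_mult)
  qed
  have "c ^ (n - 1) * P * (c * Y * (c * Z)) = c * (c ^ n * (P * (Y * Z)))"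
    by (simp add: n algebra_simps)
  also have "\<dots> = c * ((- (q * N * \<alpha>)) ^ n * (c * Y) ^ n)"
    unfolding PYZ power_mult_distrib by (simp only: ac_simps)
  also have "(- (q * N * \<alpha>)) ^ n * (c * Y) ^ n = (N * (\<alpha> * \<beta>) * q ^ Suc n) ^ n"
    unfolding cY power_mult_distrib [symmetric] by (simp add: algebra_simps)
  also have "c * \<dots> = c * ((-1) ^ (n + 1) * (-1) ^ (n + 1))
      * N ^ n * ((\<alpha> * \<beta>) ^ (n - 1) * (\<alpha> * \<beta>)) * (q ^ Suc n) ^ n"
    by (simp only: minus_one_mult_self n power_Suc2 power_mult_distrib diff_Suc_1 mult_1_left
        mult_1_right ac_simps)
  also have "\<dots> = ?X * (c * Y * (c * Z))"
    unfolding W q_pow [symmetric] by (simp only: ac_simps)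
  finally have "c ^ (n - 1) * P * (c * Y * (c * Z)) = ?X * (c * Y * (c * Z))" .
  moreover have "c * Y * (c * Z) \<noteq> 0"
    unfolding W using assms(2-4) by simp
  ultimately show ?thesis
    by (rule mult_right_cancel [THEN iffD1, rotated])
qed

lemma resultant_power_diff_poly_pderiv:
  fixes \<alpha> \<beta> s :: "'a::{alg_closed_field, field_char_0}"
  assumes "0 < n" and "\<alpha> \<noteq> \<beta>" and "\<alpha> \<noteq> 0" and "\<beta> \<noteq> 0" and "s \<noteq> 0"
  shows "resultant (power_diff_poly \<alpha> \<beta> s n) (pderiv (power_diff_poly \<alpha> \<beta> s n))
       = (-1) ^ (n + 1) * (\<alpha> - \<beta>) * of_nat n ^ n * (\<alpha> * \<beta>) ^ (n - 1) * (2 * s) ^ (n * (n - 1))"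
proof -
  define F where "F = power_diff_poly \<alpha> \<beta> s n"
  define P where "P = (\<Prod>z\<in>#proots F. poly (pderiv F) z)"
  have deg: "degree F = n" and lc: "lead_coeff F = \<alpha> - \<beta>"
    unfolding F_def
    using degree_power_diff_poly[OF assms(2)] lead_coeff_power_diff_poly[OF assms(2)] by simp_all
  then have "F \<noteq> 0"
    using assms(1) by auto
  have "resultant F (pderiv F) = (\<alpha> - \<beta>) ^ (n - 1) * P"
    using resultant_eq_prod_proots[OF \<open>F \<noteq> 0\<close>] by (simp add: P_def deg lc[unfolded deg] degree_pderiv)
  also have "\<dots> = (-1) ^ (n + 1) * (\<alpha> - \<beta>) * of_nat n ^ n * (\<alpha> * \<beta>) ^ (n - 1) * (2 * s) ^ (n * (n - 1))"
    using shift_products_elim[OF assms(1,3,4) _ prod_proots_pderiv_power_diff_poly[OF assms(1,2)]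
        prod_proots_power_diff_poly_plus[OF assms(1,2)] prod_proots_power_diff_poly_minus[OF assms(1,2)]]
      assms(5)
    unfolding P_def F_def by simp
  finally show ?thesis
    unfolding F_def .
qed

lemma discriminant_power_diff_poly:
  fixes \<alpha> \<beta> s :: "'a::{alg_closed_field, field_char_0}"
  assumes "0 < n" and "\<alpha> \<noteq> \<beta>" and "\<alpha> \<noteq> 0" and "\<beta> \<noteq> 0" and "s \<noteq> 0"
  shows "discriminant (power_diff_poly \<alpha> \<beta> s n) = (-1) ^ (n * (n - 1) div 2) * (-1) ^ (n + 1)
      * of_nat n ^ n * (\<alpha> * \<beta>) ^ (n - 1) * (2 * s) ^ (n * (n - 1))"
  using resultant_power_diff_poly_pderiv[OF assms] degree_power_diff_poly[OF assms(2)]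
    lead_coeff_power_diff_poly[OF assms(2)] assms(2)
  by (simp add: discriminant_def)

lemma (in field_hom) discriminant_map_poly:
  "discriminant (map_poly hom f) = hom (discriminant f)"
  by (simp add: discriminant_def resultant_hom map_poly_pderiv [symmetric] hom_div hom_mult hom_power hom_uminus)

interpretation of_real_poly_hom: map_poly_comm_ring_hom "of_real :: real \<Rightarrow> complex" ..

lemma discriminant_power_diff_poly_real:
  fixes \<alpha> \<beta> s :: real
  assumes "0 < n" and "\<alpha> \<noteq> \<beta>" and "\<alpha> \<noteq> 0" and "\<beta> \<noteq> 0" and "s \<noteq> 0"
  shows "discriminant (power_diff_poly \<alpha> \<beta> s n) = (-1) ^ (n * (n - 1) div 2) * (-1) ^ (n + 1)
      * of_nat n ^ n * (\<alpha> * \<beta>) ^ (n - 1) * (2 * s) ^ (n * (n - 1))"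
proof -
  have "complex_of_real (discriminant (power_diff_poly \<alpha> \<beta> s n))
      = discriminant (power_diff_poly (of_real \<alpha>) (of_real \<beta>) (of_real s) n)"
    by (simp flip: of_real_hom.discriminant_map_poly of_real_poly_hom.map_poly_power_diff_poly)
  also have "\<dots> = of_real ((-1) ^ (n * (n - 1) div 2) * (-1) ^ (n + 1)
      * of_nat n ^ n * (\<alpha> * \<beta>) ^ (n - 1) * (2 * s) ^ (n * (n - 1)))"
    using discriminant_power_diff_poly[of n "of_real \<alpha> :: complex" "of_real \<beta>" "of_real s"] assms
    by simp
  finally show ?thesis
    by (simp only: of_real_eq_iff)
qed

lemma one_plus_sqrt2_powi_neq_one_minus:
  assumes "r \<noteq> 0"
  shows "(1 + sqrt 2) powi r \<noteq> (1 - sqrt 2 :: real) powi r"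
proof -
  have "(1 + sqrt 2) ^ k \<noteq> (1 - sqrt 2 :: real) ^ k" if "0 < k" for k
  proof -
    have "1 < sqrt (2 :: real)" and "sqrt (2 :: real) < 2"
      by (simp_all add: real_less_lsqrt)
    then have "\<bar>(1 - sqrt 2 :: real) ^ k\<bar> < 1"
      unfolding power_abs using that by (subst power_less_one_iff) auto
    moreover have "1 < (1 + sqrt 2 :: real) ^ k"
      using that by (intro one_less_power) auto
    ultimately show ?thesis
      by auto
  qed
  moreover obtain k where "0 < k" and "r = int k \<or> r = - int k"
    using assms by (cases r rule: int_cases2) auto
  ultimately show ?thesis
    by (auto simp: power_int_minus)
qed

lemma one_plus_sqrt2_powi_mult_one_minus:
  "(1 + sqrt 2) powi r * (1 - sqrt 2 :: real) powi r = (-1) powi r"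
  by (simp add: power_int_mult_distrib [symmetric] algebra_simps)

lemma odd_power_product_eq_two_power:
  fixes x y :: real
  assumes "odd p" and "x ^ 2 = 1 / 64" and "y ^ 2 = 8"
  shows "x ^ (p - 1) * y ^ (p * (p - 1)) = 2 ^ (3 * (p - 1) * (p - 2) div 2)"
proof -
  obtain k where p: "p = 2 * k + 1"
    using assms(1) oddE by blast
  have "x ^ (p - 1) = (1 / 64) ^ k"
    by (simp add: p power_mult assms(2))
  moreover have "y ^ (p * (p - 1)) = 8 ^ (k * (2 * k - 1)) * 64 ^ k"
  proof -
    have "p * (p - 1) = 2 * (k * (2 * k - 1) + 2 * k)"
      by (cases k) (simp_all add: p algebra_simps)
    then have "y ^ (p * (p - 1)) = (y ^ 2) ^ (k * (2 * k - 1) + 2 * k)"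
      by (simp only: power_mult)
    then show ?thesis
      by (simp add: assms(3) power_add power_mult)
  qed
  moreover have "3 * (p - 1) * (p - 2) div 2 = 3 * (k * (2 * k - 1))"
    by (cases k) (simp_all add: p algebra_simps)
  ultimately show ?thesis
    by (simp add: power_mult power_divide)
qed

lemma f_rp_parameters:
  fixes r :: int
  assumes "r \<noteq> 0"
  defines "\<alpha> \<equiv> (1 + sqrt 2) powi r / (2 * sqrt 2)" and "\<beta> \<equiv> (1 - sqrt 2) powi r / (2 * sqrt 2)"
  shows "\<alpha> \<noteq> \<beta>" and "\<alpha> \<noteq> 0" and "\<beta> \<noteq> 0" and "(\<alpha> * \<beta>) ^ 2 = 1 / 64"
proof -
  have "1 < sqrt (2 :: real)"
    by simp
  then have s: "1 + sqrt 2 \<noteq> (0 :: real)" "1 - sqrt 2 \<noteq> (0 :: real)"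
    by linarith+
  show "\<alpha> \<noteq> \<beta>"
    using one_plus_sqrt2_powi_neq_one_minus[OF assms(1)] by (simp add: \<alpha>_def \<beta>_def)
  show "\<alpha> \<noteq> 0" and "\<beta> \<noteq> 0"
    using s by (simp_all add: \<alpha>_def \<beta>_def)
  have "\<alpha> * \<beta> = (-1) powi r / 8"
    using one_plus_sqrt2_powi_mult_one_minus[of r] by (simp add: \<alpha>_def \<beta>_def power_mult_distrib)
  then show "(\<alpha> * \<beta>) ^ 2 = 1 / 64"
    by (simp only: power_divide) (simp add: power2_eq_square)
qed

theorem theorem4p13:
  fixes p :: nat and r :: int
  assumes "prime p" and "odd p" and "\<not> int p dvd r"
  shows "discriminant (f_rp r p)
         = (-1) ^ (p * (p - 1) div 2) * 2 ^ (3 * (p - 1) * (p - 2) div 2) * real p ^ p"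
proof -
  define \<alpha> where "\<alpha> = (1 + sqrt 2) powi r / (2 * sqrt 2 :: real)"
  define \<beta> where "\<beta> = (1 - sqrt 2) powi r / (2 * sqrt 2 :: real)"
  have "r \<noteq> 0"
    using assms(3) by auto
  note parameters = f_rp_parameters[OF this, folded \<alpha>_def \<beta>_def]
  have "f_rp r p = power_diff_poly \<alpha> \<beta> (sqrt 2) p"
    by (simp add: f_rp_def power_diff_poly_def \<alpha>_def \<beta>_def)
  moreover have "(2 * sqrt 2) ^ 2 = (8 :: real)"
    by (simp add: power_mult_distrib)
  ultimately show ?thesis
    using discriminant_power_diff_poly_real[of p \<alpha> \<beta> "sqrt 2"] parameters assms(2)
      odd_power_product_eq_two_power[of p "\<alpha> * \<beta>" "2 * sqrt 2"]
    by (simp add: odd_pos)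
qed

end
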